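(* For every prime $p$ there exist $\varepsilon(p),\delta(p)\in(0,\infty)$ such that the following holds. Let $n\geq p^2$ be an integer and let $\varepsilon<\varepsilon(p)$. Then every $(C,\mathbf 1,\mathbb{F}_p^n,\varepsilon)$-arithmetic expander, where $C$ is the $p$-term arithmetic progression matrix, has size at least $\delta(p)\,n^{p-1}$. Concretely: if $D\subseteq\mathbb{F}_p^n$ is a multiset with $\lambda_{L_{\mathbb{F}_p^n}}(L_D)\leq\varepsilon$, then $|D|\geq\delta(p)\,n^{p-1}$ (with $|D|$ counted with multiplicity).
   Context: For a $t$-linear form $A$ on $\mathbb{R}^V$ and $r\in[1,\infty]$ let $\|A\|_{\ell_r,\dots,\ell_r}=\sup\{A(x[1],\dots,x[t])/(\|x[1]\|_{\ell_r}\cdots\|x[t]\|_{\ell_r}) : x[1],\dots,x[t]\in\mathbb{R}^V\setminus\{0\}\}$. For a nonempty multiset $D\subseteq\mathbb{F}_p^n$, let $L_D$ be the $p$-uniform hypergraph on vertex set $\mathbb{F}_p^n$ in which the multiplicity of the edge $\{u_1,\dots,u_p\}$ is $e_{L_D}(u_1,\dots,u_p)=\sum_{y\in D}\sum_{x\in\mathbb{F}_p^n}\sum_{\sigma\in S_p}\prod_{i=1}^p 1[u_i=x+(\sigma(i)-1)y]$ (sum over $D$ with multiplicity, $S_p$ the permutations of $\{1,\dots,p\}$). Its normalized adjacency form $A_{L_D}$ is the $p$-linear form on $\mathbb{R}^{\mathbb{F}_p^n}$ determined by $A_{L_D}(1_{\{u_1\}},\dots,1_{\{u_p\}})=e_{L_D}(u_1,\dots,u_p)/(p!\,|D|)$.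 For hypergraphs $H,K$ of this type set $\lambda_K(H)=\|A_H-A_K\|_{\ell_p,\dots,\ell_p}$. $L_{\mathbb{F}_p^n}$ denotes $L_D$ with $D=\mathbb{F}_p^n$ (every element once). The AP matrix $C\in\mathbb{Z}^{(p-2)\times p}$ has rows $(0,\dots,0,1,-2,1,0,\dots,0)$; its solution set in $(\mathbb{F}_p^n)^p$ consists of the $p$-term progressions $(x,x+y,\dots,x+(p-1)y)$, which are the cosets of the diagonal $\{(u,\dots,u)\}$ with representatives $(0,y,2y,\dots,(p-1)y)$; a $(C,\mathbf 1,\mathbb{F}_p^n,\varepsilon)$-arithmetic expander is a multiset of such representatives, i.e. indexed by a multiset $D$ of steps $y$, such that $\lambda_{L_{\mathbb{F}_p^n}}(L_D)\leq\varepsilon$; its size is $|D|$. *)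

theory Defs
  imports Complex_Main "HOL-Computational_Algebra.Primes" "HOL-Library.Multiset" "HOL-Library.FuncSet" "HOL-Combinatorics.Permutations"
begin

definition Fpn :: "nat \<Rightarrow> nat \<Rightarrow> (nat \<Rightarrow> nat) set" where
  "Fpn p n = {x. (\<forall>j<n. x j < p) \<and> (\<forall>j\<ge>n. x j = 0)}"

definition ap_point :: "nat \<Rightarrow> (nat \<Rightarrow> nat) \<Rightarrow> nat \<Rightarrow> (nat \<Rightarrow> nat) \<Rightarrow> (nat \<Rightarrow> nat)" where
  "ap_point p x k y = (\<lambda>j. (x j + k * y j) mod p)"

text \<open>Edge multiplicity e_{L_D}(u_0,...,u_{p-1}) (0-indexed: u i corresponds to u_{i+1},
  and a permutation sigma of {0..<p} corresponds to sigma(i+1)-1).\<close>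
definition edge_mult :: "nat \<Rightarrow> nat \<Rightarrow> (nat \<Rightarrow> nat) multiset \<Rightarrow> (nat \<Rightarrow> (nat \<Rightarrow> nat)) \<Rightarrow> real" where
  "edge_mult p n D u =
     (\<Sum>y\<in>#D. \<Sum>x\<in>Fpn p n. \<Sum>\<sigma>\<in>{\<sigma>. \<sigma> permutes {0..<p}}.
        \<Prod>i<p. (if u i = ap_point p x (\<sigma> i) y then 1 else 0))"

definition adj_form :: "nat \<Rightarrow> nat \<Rightarrow> (nat \<Rightarrow> nat) multiset \<Rightarrow> (nat \<Rightarrow> (nat \<Rightarrow> nat) \<Rightarrow> real) \<Rightarrow> real" where
  "adj_form p n D f =
     (\<Sum>u\<in>{0..<p} \<rightarrow>\<^sub>E Fpn p n.
        edge_mult p n D u / (fact p * real (size D)) * (\<Prod>i<p. f i (u i)))"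

definition lr_norm :: "nat \<Rightarrow> nat \<Rightarrow> real \<Rightarrow> ((nat \<Rightarrow> nat) \<Rightarrow> real) \<Rightarrow> real" where
  "lr_norm p n r g = (\<Sum>v\<in>Fpn p n. \<bar>g v\<bar> powr r) powr (1 / r)"

definition form_norm :: "nat \<Rightarrow> nat \<Rightarrow> ((nat \<Rightarrow> (nat \<Rightarrow> nat) \<Rightarrow> real) \<Rightarrow> real) \<Rightarrow> real" where
  "form_norm p n A =
     (SUP f\<in>{f. \<forall>i<p. \<exists>v\<in>Fpn p n. f i v \<noteq> 0}.
        A f / (\<Prod>i<p. lr_norm p n (real p) (f i)))"

definition lambda_AP :: "nat \<Rightarrow> nat \<Rightarrow> (nat \<Rightarrow> nat) multiset \<Rightarrow> real" where
  "lambda_AP p n D =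
     form_norm p n (\<lambda>f. adj_form p n D f - adj_form p n (mset_set (Fpn p n)) f)"

end

theory Submission
  imports Defs "HOL-Number_Theory.Number_Theory"
begin

text \<open>If \<open>|D| < binomial n (p - 1)\<close>, a pigeonhole argument on coefficient vectors gives a
  multilinear polynomial \<open>P\<close> of degree \<open>p - 1\<close>, with a coefficient not divisible by \<open>p\<close>,
  that vanishes mod \<open>p\<close> at every step \<open>y \<in> D\<close>. Since \<open>\<Sum>k<p. k^m\<close> is \<open>0\<close> mod \<open>p\<close> for
  \<open>m < p - 1\<close> and \<open>-1\<close> for \<open>m = p - 1\<close>, the values of \<open>P\<close> along any progression with step
  \<open>y\<close> sum to \<open>-P(y)\<close> mod \<open>p\<close>. Colour each point by \<open>P\<close> mod \<open>p\<close>. No progression with step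
  in \<open>D\<close>, in any order, shows a colour pattern \<open>a\<close> with \<open>\<Sum>a \<noteq> 0\<close>; but at least a
  \<open>p^-(p-1)\<close> fraction of all steps has \<open>P(y) \<noteq> 0\<close>, so some such pattern is shown by at
  least \<open>p^(2n) / p^(2p-1)\<close> progressions. Testing both forms on the colour classes of that
  pattern gives \<open>\<lambda> \<ge> 1 / (p! p^(2p-1))\<close>.\<close>

definition coord_box :: "nat set \<Rightarrow> nat \<Rightarrow> (nat \<Rightarrow> nat) \<Rightarrow> (nat \<Rightarrow> nat) set" where
  "coord_box J p c = {x. (\<forall>j\<in>J. x j < p) \<and> (\<forall>j. j \<notin> J \<longrightarrow> x j = c j)}"

lemma bij_betw_restrict_coord_box:
  "bij_betw (\<lambda>x. restrict x J) (coord_box J p c) (J \<rightarrow>\<^sub>E {..<p})"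
proof (rule bij_betw_imageI)
  show "inj_on (\<lambda>x. restrict x J) (coord_box J p c)"
  proof (rule inj_onI, rule ext)
    fix x y j assume x: "x \<in> coord_box J p c" and y: "y \<in> coord_box J p c"
      and eq: "restrict x J = restrict y J"
    show "x j = y j"
    proof (cases "j \<in> J")
      case True
      then show ?thesis using fun_cong[OF eq, of j] by simp
    next
      case False
      then show ?thesis using x y by (simp add: coord_box_def)
    qed
  qed
  show "(\<lambda>x. restrict x J) ` coord_box J p c = J \<rightarrow>\<^sub>E {..<p}"
  proof (intro equalityI subsetI)
    fix g assume g: "g \<in> J \<rightarrow>\<^sub>E {..<p}"
    let ?x = "\<lambda>j. if j \<in> J then g j else c j"
    have "restrict ?x J = g"
    proof
      fix j show "restrict ?x J j = g j" using PiE_arb[OF g] by (cases "j \<in> J") simp_all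
    qed
    moreover have "?x \<in> coord_box J p c" using g by (auto simp: coord_box_def)
    ultimately show "g \<in> (\<lambda>x. restrict x J) ` coord_box J p c" by (rule image_eqI[OF sym])
  next
    fix g assume "g \<in> (\<lambda>x. restrict x J) ` coord_box J p c"
    then show "g \<in> J \<rightarrow>\<^sub>E {..<p}" by (auto simp: coord_box_def)
  qed
qed

lemma finite_coord_box: "finite J \<Longrightarrow> finite (coord_box J p c)"
  using bij_betw_finite[OF bij_betw_restrict_coord_box] by (simp add: finite_PiE)

lemma card_coord_box: "finite J \<Longrightarrow> card (coord_box J p c) = p ^ card J"
  using bij_betw_same_card[OF bij_betw_restrict_coord_box] by (simp add: card_PiE)

lemma Fpn_eq_coord_box: "Fpn p n = coord_box {..<n} p (\<lambda>_. 0)"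
  by (auto simp: Fpn_def coord_box_def)

lemma finite_Fpn: "finite (Fpn p n)"
  by (simp add: Fpn_eq_coord_box finite_coord_box)

lemma card_Fpn: "card (Fpn p n) = p ^ n"
  by (simp add: Fpn_eq_coord_box card_coord_box)

lemma zero_in_Fpn: "0 < p \<Longrightarrow> (\<lambda>_. 0) \<in> Fpn p n"
  by (simp add: Fpn_def)

lemma ap_point_in_Fpn: "0 < p \<Longrightarrow> x \<in> Fpn p n \<Longrightarrow> y \<in> Fpn p n \<Longrightarrow> ap_point p x k y \<in> Fpn p n"
  by (auto simp: Fpn_def ap_point_def)

lemma sum_sum_mset_swap: "(\<Sum>u\<in>U. \<Sum>y\<in>#D. g y u) = (\<Sum>y\<in>#D. \<Sum>u\<in>U. g y u)"
  by (induction D) (auto simp: sum.distrib)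

lemma adj_form_eq_ap_sum:
  assumes p: "0 < p" and D: "set_mset D \<subseteq> Fpn p n"
  shows "adj_form p n D f =
    (\<Sum>y\<in>#D. \<Sum>x\<in>Fpn p n. \<Sum>\<sigma>\<in>{\<sigma>. \<sigma> permutes {0..<p}}. \<Prod>i<p. f i (ap_point p x (\<sigma> i) y))
      / (fact p * real (size D))"
proof -
  let ?P = "{\<sigma>. \<sigma> permutes {0..<p}}"
  let ?U = "{0..<p} \<rightarrow>\<^sub>E Fpn p n"
  let ?\<delta> = "\<lambda>v w. if v = w then 1 else 0 :: real"
  have point_eval: "(\<Sum>u\<in>?U. \<Prod>i<p. ?\<delta> (u i) (ap_point p x (\<sigma> i) y) * f i (u i))
      = (\<Prod>i<p. f i (ap_point p x (\<sigma> i) y))" if "x \<in> Fpn p n" "y \<in> Fpn p n" for x y \<sigma>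
  proof -
    have "(\<Sum>u\<in>?U. \<Prod>i<p. ?\<delta> (u i) (ap_point p x (\<sigma> i) y) * f i (u i))
        = (\<Prod>i\<in>{0..<p}. \<Sum>v\<in>Fpn p n. ?\<delta> v (ap_point p x (\<sigma> i) y) * f i v)"
      by (subst prod_sum_PiE) (auto simp: finite_Fpn atLeast0LessThan)
    also have "\<dots> = (\<Prod>i\<in>{0..<p}. \<Sum>v\<in>Fpn p n. if v = ap_point p x (\<sigma> i) y then f i v else 0)"
      by (intro prod.cong sum.cong) auto
    finally show ?thesis
      using ap_point_in_Fpn[OF p that] by (simp add: atLeast0LessThan finite_Fpn)
  qed
  have "(\<Sum>u\<in>?U. edge_mult p n D u * (\<Prod>i<p. f i (u i)))
      = (\<Sum>y\<in>#D. \<Sum>x\<in>Fpn p n. \<Sum>\<sigma>\<in>?P. \<Sum>u\<in>?U. \<Prod>i<p. ?\<delta> (u i) (ap_point p x (\<sigma> i) y) * f i (u i))"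
    by (simp add: edge_mult_def sum_mset_distrib_right sum_distrib_right prod.distrib
        sum_sum_mset_swap sum.swap[where A = ?U])
  also have "\<dots> = (\<Sum>y\<in>#D. \<Sum>x\<in>Fpn p n. \<Sum>\<sigma>\<in>?P. \<Prod>i<p. f i (ap_point p x (\<sigma> i) y))"
    using D by (intro image_mset_cong sum.cong refl arg_cong[where f = sum_mset] point_eval) auto
  finally show ?thesis
    by (simp add: adj_form_def sum_divide_distrib[symmetric])
qed

lemma prime_dvd_power_sum:
  assumes p: "prime p" and m: "m < p - 1"
  shows "int p dvd (\<Sum>k<p. int k ^ m)"
  using m
proof (induction m rule: less_induct)
  case (less m)
  let ?S = "\<lambda>i. \<Sum>k<p. int k ^ i"
  have binomial: "int (Suc k) ^ Suc m - int k ^ Suc m = (\<Sum>i\<le>m. of_nat (Suc m choose i) * int k ^ i)"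
    for k
  proof -
    have "int (Suc k) ^ Suc m = (int k + 1) ^ Suc m" by (simp add: add.commute)
    also have "\<dots> = (\<Sum>i\<le>Suc m. of_nat (Suc m choose i) * int k ^ i)"
      by (subst binomial_ring) simp
    finally have "int (Suc k) ^ Suc m = (\<Sum>i\<le>Suc m. of_nat (Suc m choose i) * int k ^ i)" .
    then show ?thesis by (simp add: sum.atMost_Suc)
  qed
  have "int p ^ Suc m = (\<Sum>k<p. int (Suc k) ^ Suc m - int k ^ Suc m)"
    using sum_lessThan_telescope[of "\<lambda>k. int k ^ Suc m" p] by simp
  also have "\<dots> = (\<Sum>i\<le>m. of_nat (Suc m choose i) * ?S i)"
    unfolding binomial by (simp add: sum_distrib_left sum.swap[of _ "{..<p}"])
  also have "\<dots> = (\<Sum>i<m. of_nat (Suc m choose i) * ?S i) + int (Suc m) * ?S m"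
    by (simp add: lessThan_Suc_atMost[symmetric])
  finally have "int (Suc m) * ?S m = int p ^ Suc m - (\<Sum>i<m. of_nat (Suc m choose i) * ?S i)"
    by simp
  moreover have "int p dvd (\<Sum>i<m. of_nat (Suc m choose i) * ?S i)"
    using less by (intro dvd_sum) auto
  ultimately have "int p dvd int (Suc m) * ?S m" by simp
  moreover have "\<not> int p dvd int (Suc m)"
    using less.prems by (auto simp only: int_dvd_int_iff dest!: dvd_imp_le)
  ultimately show ?case
    using p by (simp add: prime_dvd_mult_iff prime_nat_int_transfer)
qed

lemma power_sum_pred_cong:
  assumes p: "prime p"
  shows "[(\<Sum>k<p. int k ^ (p - 1)) = - 1] (mod int p)"
proof -
  have p2: "p \<ge> 2" using p by (simp add: prime_ge_2_nat)
  have "[(\<Sum>k<p. int k ^ (p - 1)) = (\<Sum>k<p. if k = 0 then 0 else 1)] (mod int p)"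
  proof (rule cong_sum)
    fix k assume k: "k \<in> {..<p}"
    show "[int k ^ (p - 1) = (if k = 0 then 0 else 1)] (mod int p)"
    proof (cases "k = 0")
      case True
      then show ?thesis using p2 by (simp add: zero_power)
    next
      case False
      then have "\<not> p dvd k" using k by (auto dest: dvd_imp_le)
      then have "[k ^ (p - 1) = 1] (mod p)" using fermat_theorem[OF p] by blast
      then show ?thesis using False by (simp add: cong_int_iff[symmetric])
    qed
  qed
  also have "(\<Sum>k<p. if k = 0 then 0 else 1) = int p - 1"
    using p2 by (cases p) (simp_all only: sum.lessThan_Suc_shift, simp_all)
  also have "[int p - 1 = - 1] (mod int p)"
    by (simp add: cong_iff_dvd_diff)
  finally show ?thesis .
qed

lemma sum_prod_affine_cong:
  fixes a b :: "nat \<Rightarrow> int"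
  assumes p: "prime p" and S: "finite S" "card S = p - 1"
  shows "[(\<Sum>k<p. \<Prod>j\<in>S. a j + int k * b j) = - (\<Prod>j\<in>S. b j)] (mod int p)"
proof -
  let ?S = "\<lambda>i. \<Sum>k<p. int k ^ i"
  have "(\<Sum>k<p. \<Prod>j\<in>S. a j + int k * b j)
      = (\<Sum>k<p. \<Sum>T\<in>Pow S. int k ^ card T * ((\<Prod>j\<in>T. b j) * (\<Prod>j\<in>S - T. a j)))"
    using prod_add[OF S(1), of "\<lambda>j. int _ * b j" a]
    by (simp add: add.commute prod.distrib mult.assoc)
  also have "\<dots> = (\<Sum>T\<in>Pow S. ?S (card T) * ((\<Prod>j\<in>T. b j) * (\<Prod>j\<in>S - T. a j)))"
    by (subst sum.swap) (simp add: sum_distrib_right)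
  also have "[\<dots> = (\<Sum>T\<in>Pow S. if T = S then - (\<Prod>j\<in>S. b j) else 0)] (mod int p)"
  proof (rule cong_sum)
    fix T assume T: "T \<in> Pow S"
    show "[?S (card T) * ((\<Prod>j\<in>T. b j) * (\<Prod>j\<in>S - T. a j))
        = (if T = S then - (\<Prod>j\<in>S. b j) else 0)] (mod int p)"
    proof (cases "T = S")
      case True
      then show ?thesis
        using cong_mult[OF power_sum_pred_cong[OF p] cong_refl, of "\<Prod>j\<in>S. b j"] S by simp
    next
      case False
      then have "card T < p - 1" using T psubset_card_mono[OF S(1)] S(2) by auto
      then have "int p dvd ?S (card T)" by (rule prime_dvd_power_sum[OF p])
      then show ?thesis using False by (simp add: cong_0_iff)
    qed
  qed
  also have "(\<Sum>T\<in>Pow S. if T = S then - (\<Prod>j\<in>S. b j) else 0) = - (\<Prod>j\<in>S. b j)"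
    using S(1) by simp
  finally show ?thesis .
qed

definition subsets_of_size :: "nat \<Rightarrow> nat \<Rightarrow> nat set set" where
  "subsets_of_size k n = {S. S \<subseteq> {..<n} \<and> card S = k}"

definition multilinear_poly :: "(nat set \<Rightarrow> int) \<Rightarrow> nat set set \<Rightarrow> (nat \<Rightarrow> nat) \<Rightarrow> int" where
  "multilinear_poly d F y = (\<Sum>S\<in>F. d S * (\<Prod>j\<in>S. int (y j)))"

lemma finite_subsets_of_size: "finite (subsets_of_size k n)"
  unfolding subsets_of_size_def by (rule finite_subset[of _ "Pow {..<n}"]) auto

lemma card_subsets_of_size: "card (subsets_of_size k n) = n choose k"
  unfolding subsets_of_size_def using n_subsets[of "{..<n}" k] by simp

lemma sum_ap_multilinear_poly_cong:
  assumes p: "prime p" and F: "\<And>S. S \<in> F \<Longrightarrow> finite S \<and> card S = p - 1"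
  shows "[(\<Sum>k<p. multilinear_poly d F (ap_point p x k y)) = - multilinear_poly d F y] (mod int p)"
proof -
  have "[(\<Sum>k<p. multilinear_poly d F (ap_point p x k y))
        = (\<Sum>k<p. \<Sum>S\<in>F. d S * (\<Prod>j\<in>S. int (x j) + int k * int (y j)))] (mod int p)"
    unfolding multilinear_poly_def ap_point_def
    by (intro cong_sum cong_mult cong_refl cong_prod) (simp add: cong_def of_nat_mod)
  also have "(\<Sum>k<p. \<Sum>S\<in>F. d S * (\<Prod>j\<in>S. int (x j) + int k * int (y j)))
       = (\<Sum>S\<in>F. d S * (\<Sum>k<p. \<Prod>j\<in>S. int (x j) + int k * int (y j)))"
    by (subst sum.swap) (simp add: sum_distrib_left)
  also have "[\<dots> = (\<Sum>S\<in>F. d S * - (\<Prod>j\<in>S. int (y j)))] (mod int p)"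
    using F by (intro cong_sum cong_mult cong_refl sum_prod_affine_cong[OF p]) auto
  also have "(\<Sum>S\<in>F. d S * - (\<Prod>j\<in>S. int (y j))) = - multilinear_poly d F y"
    by (simp add: multilinear_poly_def sum_negf)
  finally show ?thesis .
qed

lemma exists_multilinear_poly_vanishing_on:
  assumes p: "1 < p" and F: "finite F" and Y: "finite Y" and card: "card Y < card F"
  shows "\<exists>d. \<exists>S0\<in>F. \<not> int p dvd d S0 \<and> (\<forall>y\<in>Y. int p dvd multilinear_poly d F y)"
proof -
  let ?A = "F \<rightarrow>\<^sub>E {..<p}"
  let ?B = "Y \<rightarrow>\<^sub>E {0..<int p}"
  let ?\<Phi> = "\<lambda>c. restrict (\<lambda>y. multilinear_poly (\<lambda>S. int (c S)) F y mod int p) Y"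
  have "card ?B = p ^ card Y" "card ?A = p ^ card F"
    using Y F by (simp_all add: card_PiE)
  then have "card ?B < card ?A" using power_strict_increasing[OF card p] by simp
  moreover have "?\<Phi> ` ?A \<subseteq> ?B" using p by (auto simp: PiE_def)
  ultimately have "\<not> inj_on ?\<Phi> ?A"
    using card_inj_on_le[of ?\<Phi> ?A ?B] Y by (metis finite_PiE finite_atLeastLessThan_int leD)
  then obtain c c' where c: "c \<in> ?A" "c' \<in> ?A" "c \<noteq> c'" "?\<Phi> c = ?\<Phi> c'"
    unfolding inj_on_def by blast
  then obtain S0 where S0: "S0 \<in> F" "c S0 \<noteq> c' S0" by (metis PiE_ext)
  define d where "d S = int (c S) - int (c' S)" for S
  have "\<not> int p dvd d S0"
  proof
    assume "int p dvd d S0"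
    moreover have "d S0 \<noteq> 0" using S0 by (simp add: d_def)
    ultimately have "\<bar>int p\<bar> \<le> \<bar>d S0\<bar>" by (rule dvd_imp_le_int[rotated])
    moreover have "c S0 < p" "c' S0 < p" using c(1,2) S0(1) by auto
    ultimately show False by (simp add: d_def)
  qed
  moreover have "int p dvd multilinear_poly d F y" if y: "y \<in> Y" for y
  proof -
    have "multilinear_poly d F y
        = multilinear_poly (\<lambda>S. int (c S)) F y - multilinear_poly (\<lambda>S. int (c' S)) F y"
      by (simp add: multilinear_poly_def d_def sum_subtractf[symmetric] left_diff_distrib)
    then show ?thesis
      using fun_cong[OF c(4), of y] y by (simp add: mod_eq_dvd_iff)
  qed
  ultimately show ?thesis using S0(1) by blast
qed

lemma exists_multilinear_poly_nonzero_agreeing_outside: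
  assumes p: "prime p" and S0: "S0 \<in> subsets_of_size (p - 1) n" and nd: "\<not> int p dvd d S0"
    and z: "z \<in> Fpn p n"
  shows "\<exists>y\<in>Fpn p n. \<not> int p dvd multilinear_poly d (subsets_of_size (p - 1) n) y
           \<and> (\<forall>j. j \<notin> S0 \<longrightarrow> y j = z j)"
proof -
  let ?F = "subsets_of_size (p - 1) n"
  let ?P = "multilinear_poly d ?F"
  have p2: "p \<ge> 2" using p by (simp add: prime_ge_2_nat)
  have S0n: "S0 \<subseteq> {..<n}" "card S0 = p - 1" using S0 by (auto simp: subsets_of_size_def)
  have fS0: "finite S0" using S0n(1) finite_subset by blast
  define x0 where "x0 j = (if j \<in> S0 then 0 else z j)" for j
  define e where "e j = (if j \<in> S0 then 1 else 0 :: nat)" for j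
  have monomial: "(\<Prod>j\<in>S. int (e j)) = (if S = S0 then 1 else 0)" if S: "S \<in> ?F" for S
  proof -
    have fS: "finite S" using S by (auto simp: subsets_of_size_def intro: finite_subset)
    have "(\<Prod>j\<in>S. int (e j)) = (if S \<subseteq> S0 then 1 else 0)"
      using fS by (auto simp: e_def subset_iff intro!: prod.neutral prod_zero)
    also have "\<dots> = (if S = S0 then 1 else 0)"
      using card_subset_eq[OF fS0, of S] S S0n by (auto simp: subsets_of_size_def)
    finally show ?thesis .
  qed
  have "?P e = (\<Sum>S\<in>?F. if S = S0 then d S else 0)"
    unfolding multilinear_poly_def by (rule sum.cong) (simp_all add: monomial)
  also have "\<dots> = d S0" using S0 by (simp add: finite_subsets_of_size)
  finally have "?P e = d S0" .
  \<comment> \<open>the values along the line through \<open>x0\<close> in direction \<open>e\<close> sum to \<open>-d S0 \<noteq> 0\<close> mod \<open>p\<close>\<close>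
  moreover have "[(\<Sum>k<p. ?P (ap_point p x0 k e)) = - ?P e] (mod int p)"
    using p by (intro sum_ap_multilinear_poly_cong) (auto simp: subsets_of_size_def intro: finite_subset)
  ultimately obtain k where k: "k < p" "\<not> int p dvd ?P (ap_point p x0 k e)"
    using nd by (metis cong_dvd_iff dvd_minus_iff dvd_sum lessThan_iff)
  have "x0 \<in> Fpn p n" using z by (auto simp: Fpn_def x0_def)
  moreover have "e \<in> Fpn p n" using S0n p2 by (auto simp: Fpn_def e_def)
  ultimately have "ap_point p x0 k e \<in> Fpn p n" using p2 by (simp add: ap_point_in_Fpn)
  moreover have "ap_point p x0 k e j = z j" if "j \<notin> S0" for j
    using that z p2 by (cases "j < n") (auto simp: ap_point_def x0_def e_def Fpn_def)
  ultimately show ?thesis using k by blast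
qed

lemma card_Fpn_le_multilinear_poly_nonzero:
  assumes p: "prime p" and S0: "S0 \<in> subsets_of_size (p - 1) n" and nd: "\<not> int p dvd d S0"
  shows "card (Fpn p n)
    \<le> p ^ (p - 1) * card {y\<in>Fpn p n. \<not> int p dvd multilinear_poly d (subsets_of_size (p - 1) n) y}"
proof -
  let ?G = "{y\<in>Fpn p n. \<not> int p dvd multilinear_poly d (subsets_of_size (p - 1) n) y}"
  have S0n: "S0 \<subseteq> {..<n}" "card S0 = p - 1" using S0 by (auto simp: subsets_of_size_def)
  have fS0: "finite S0" using S0n(1) finite_subset by blast
  have "Fpn p n \<subseteq> (\<Union>y\<in>?G. coord_box S0 p y)"
  proof
    fix z assume z: "z \<in> Fpn p n"
    then obtain y where "y \<in> ?G" "\<forall>j. j \<notin> S0 \<longrightarrow> y j = z j"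
      using exists_multilinear_poly_nonzero_agreeing_outside[where d = d, OF p S0 nd] by blast
    moreover have "z \<in> coord_box S0 p y" using calculation(2) z S0n(1)
      by (auto simp: Fpn_def coord_box_def)
    ultimately show "z \<in> (\<Union>y\<in>?G. coord_box S0 p y)" by blast
  qed
  then have "card (Fpn p n) \<le> card (\<Union>y\<in>?G. coord_box S0 p y)"
    by (intro card_mono) (simp_all add: finite_Fpn finite_coord_box[OF fS0])
  also have "\<dots> \<le> (\<Sum>y\<in>?G. card (coord_box S0 p y))"
    by (rule card_UN_le) (simp add: finite_Fpn)
  also have "\<dots> = p ^ (p - 1) * card ?G"
    by (simp add: card_coord_box[OF fS0] S0n(2))
  finally show ?thesis .
qed

lemma abs_le_lr_norm:
  assumes p: "0 < p" and v: "v \<in> Fpn p n"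
  shows "\<bar>g v\<bar> \<le> lr_norm p n (real p) g"
proof -
  have "\<bar>g v\<bar> powr real p \<le> (\<Sum>w\<in>Fpn p n. \<bar>g w\<bar> powr real p)"
    using v by (intro member_le_sum) (simp_all add: finite_Fpn)
  then have "(\<bar>g v\<bar> powr real p) powr (1 / real p) \<le> lr_norm p n (real p) g"
    unfolding lr_norm_def by (intro powr_mono2) auto
  then show ?thesis using p by (simp add: powr_powr)
qed

lemma lr_norm_pos:
  assumes "v \<in> Fpn p n" and "g v \<noteq> 0"
  shows "0 < lr_norm p n (real p) g"
proof -
  have "0 < \<bar>g v\<bar> powr real p" using assms(2) by simp
  also have "\<dots> \<le> (\<Sum>w\<in>Fpn p n. \<bar>g w\<bar> powr real p)"
    using assms(1) by (intro member_le_sum) (simp_all add: finite_Fpn)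
  finally show ?thesis by (simp add: lr_norm_def)
qed

lemma lr_norm_le_card_powr:
  assumes "\<And>v. v \<in> Fpn p n \<Longrightarrow> \<bar>g v\<bar> \<le> 1"
  shows "lr_norm p n (real p) g \<le> real (p ^ n) powr (1 / real p)"
proof -
  have "(\<Sum>w\<in>Fpn p n. \<bar>g w\<bar> powr real p) \<le> (\<Sum>w\<in>Fpn p n. 1 powr real p)"
    using assms by (intro sum_mono powr_mono2) auto
  then show ?thesis
    unfolding lr_norm_def by (intro powr_mono2) (simp_all add: card_Fpn sum_nonneg)
qed

lemma sum_mset_abs_le:
  fixes f :: "'a \<Rightarrow> real"
  assumes "\<And>y. y \<in># D \<Longrightarrow> \<bar>f y\<bar> \<le> c"
  shows "\<bar>\<Sum>y\<in>#D. f y\<bar> \<le> real (size D) * c"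
  using assms
proof (induction D)
  case (add x D)
  have "\<bar>\<Sum>y\<in>#add_mset x D. f y\<bar> \<le> \<bar>f x\<bar> + \<bar>\<Sum>y\<in>#D. f y\<bar>" by simp
  also have "\<dots> \<le> c + real (size D) * c" using add by (intro add_mono) auto
  finally show ?case by (simp add: algebra_simps)
qed simp

lemma abs_adj_form_le:
  assumes p: "0 < p" and D: "set_mset D \<subseteq> Fpn p n" "D \<noteq> {#}"
    and N: "\<And>i v. i < p \<Longrightarrow> v \<in> Fpn p n \<Longrightarrow> \<bar>f i v\<bar> \<le> N i"
  shows "\<bar>adj_form p n D f\<bar> \<le> real (p ^ n) * (\<Prod>i<p. N i)"
proof -
  let ?P = "{\<sigma>. \<sigma> permutes {0..<p}}"
  have ap_sum: "\<bar>\<Sum>x\<in>Fpn p n. \<Sum>\<sigma>\<in>?P. \<Prod>i<p. f i (ap_point p x (\<sigma> i) y)\<bar>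
      \<le> real (p ^ n) * fact p * (\<Prod>i<p. N i)" if y: "y \<in> Fpn p n" for y
  proof -
    have "\<bar>\<Sum>x\<in>Fpn p n. \<Sum>\<sigma>\<in>?P. \<Prod>i<p. f i (ap_point p x (\<sigma> i) y)\<bar>
        \<le> (\<Sum>x\<in>Fpn p n. \<Sum>\<sigma>\<in>?P. \<bar>\<Prod>i<p. f i (ap_point p x (\<sigma> i) y)\<bar>)"
      by (rule order_trans[OF sum_abs]) (intro sum_mono sum_abs)
    also have "\<dots> \<le> (\<Sum>x\<in>Fpn p n. \<Sum>\<sigma>\<in>?P. \<Prod>i<p. N i)"
      unfolding abs_prod using ap_point_in_Fpn[OF p _ y]
      by (intro sum_mono prod_mono) (auto intro: N)
    also have "\<dots> = real (p ^ n) * fact p * (\<Prod>i<p. N i)"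
      using card_permutations[of "{0..<p}" p] by (simp add: card_Fpn)
    finally show ?thesis .
  qed
  have "\<bar>adj_form p n D f\<bar>
      = \<bar>\<Sum>y\<in>#D. \<Sum>x\<in>Fpn p n. \<Sum>\<sigma>\<in>?P. \<Prod>i<p. f i (ap_point p x (\<sigma> i) y)\<bar> / (fact p * real (size D))"
    by (simp add: adj_form_eq_ap_sum[OF p D(1)])
  also have "\<dots> \<le> real (size D) * (real (p ^ n) * fact p * (\<Prod>i<p. N i)) / (fact p * real (size D))"
    using D(1) by (intro divide_right_mono sum_mset_abs_le ap_sum) auto
  also have "\<dots> = real (p ^ n) * (\<Prod>i<p. N i)" using D(2) by simp
  finally show ?thesis .
qed

lemma adj_form_diff_ratio_le_lambda_AP:
  assumes p: "0 < p" and D: "set_mset D \<subseteq> Fpn p n" "D \<noteq> {#}"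
    and f: "\<And>i. i < p \<Longrightarrow> \<exists>v\<in>Fpn p n. f i v \<noteq> 0"
  shows "(adj_form p n D f - adj_form p n (mset_set (Fpn p n)) f)
           / (\<Prod>i<p. lr_norm p n (real p) (f i)) \<le> lambda_AP p n D"
proof -
  let ?S = "{f. \<forall>i<p. \<exists>v\<in>Fpn p n. f i v \<noteq> 0}"
  let ?A = "\<lambda>f. adj_form p n D f - adj_form p n (mset_set (Fpn p n)) f"
  let ?r = "\<lambda>f. ?A f / (\<Prod>i<p. lr_norm p n (real p) (f i))"
  have Fpn: "set_mset (mset_set (Fpn p n)) \<subseteq> Fpn p n" "mset_set (Fpn p n) \<noteq> {#}"
    using finite_Fpn zero_in_Fpn[OF p] by (auto simp: mset_set_empty_iff)
  \<comment> \<open>otherwise the \<open>SUP\<close> in \<open>form_norm\<close> would be a junk value\<close>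
  have "bdd_above (?r ` ?S)"
  proof (rule bdd_aboveI2)
    fix g :: "nat \<Rightarrow> (nat \<Rightarrow> nat) \<Rightarrow> real" assume g: "g \<in> ?S"
    let ?N = "\<lambda>i. lr_norm p n (real p) (g i)"
    have "\<bar>adj_form p n E g\<bar> \<le> real (p ^ n) * (\<Prod>i<p. ?N i)"
      if "set_mset E \<subseteq> Fpn p n" "E \<noteq> {#}" for E
      using that by (intro abs_adj_form_le[OF p] abs_le_lr_norm[OF p])
    from this[OF D] this[OF Fpn] have "?A g \<le> 2 * real (p ^ n) * (\<Prod>i<p. ?N i)"
      by linarith
    moreover have "0 < (\<Prod>i<p. ?N i)"
      using g lr_norm_pos by (intro prod_pos) blast
    ultimately show "?r g \<le> 2 * real (p ^ n)" by (simp add: divide_le_eq)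
  qed
  then have "?r f \<le> (SUP g\<in>?S. ?r g)" using f by (intro cSUP_upper) auto
  then show ?thesis by (simp add: lambda_AP_def form_norm_def)
qed

definition pattern_count :: "nat \<Rightarrow> nat \<Rightarrow> ((nat \<Rightarrow> nat) \<Rightarrow> 'a) \<Rightarrow> (nat \<Rightarrow> 'a) \<Rightarrow> nat" where
  "pattern_count p n c a =
     card {b \<in> Fpn p n \<times> Fpn p n. \<forall>i<p. c (ap_point p (fst b) i (snd b)) = a i}"

text \<open>The sign on the first factor makes every progression showing the colour pattern
  \<open>a\<close> contribute \<open>-1\<close> to the form, and every other progression \<open>0\<close>.\<close>
definition pattern_test :: "((nat \<Rightarrow> nat) \<Rightarrow> 'a) \<Rightarrow> (nat \<Rightarrow> 'a) \<Rightarrow> nat \<Rightarrow> (nat \<Rightarrow> nat) \<Rightarrow> real" where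
  "pattern_test c a i v = (if i = 0 then -1 else 1) * (if c v = a i then 1 else 0)"

lemma prod_pattern_test:
  assumes "0 < p"
  shows "(\<Prod>i<p. pattern_test c a i (w i)) = - (if \<forall>i<p. c (w i) = a i then 1 else 0)"
proof -
  obtain q where q: "p = Suc q" using assms by (cases p) auto
  have "(\<Prod>i<p. pattern_test c a i (w i)) = - (\<Prod>i<p. if c (w i) = a i then 1 else 0 :: real)"
    unfolding q pattern_test_def prod.lessThan_Suc_shift by simp
  also have "(\<Prod>i<p. if c (w i) = a i then 1 else 0 :: real) = (if \<forall>i<p. c (w i) = a i then 1 else 0)"
    by (auto intro: prod.neutral prod_zero)
  finally show ?thesis .
qed

lemma adj_form_pattern_test_eq_0:
  assumes p: "0 < p" and D: "set_mset D \<subseteq> Fpn p n"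
    and avoid: "\<And>x y \<sigma>. y \<in># D \<Longrightarrow> \<sigma> permutes {0..<p} \<Longrightarrow> \<not> (\<forall>i<p. c (ap_point p x (\<sigma> i) y) = a i)"
  shows "adj_form p n D (pattern_test c a) = 0"
proof -
  have "(\<Sum>x\<in>Fpn p n. \<Sum>\<sigma>\<in>{\<sigma>. \<sigma> permutes {0..<p}}. \<Prod>i<p. pattern_test c a i (ap_point p x (\<sigma> i) y)) = 0"
    if "y \<in># D" for y
    by (intro sum.neutral ballI) (use avoid[OF that] in \<open>simp add: prod_pattern_test[OF p]\<close>)
  then show ?thesis by (simp add: adj_form_eq_ap_sum[OF p D] cong: image_mset_cong)
qed

lemma adj_form_Fpn_pattern_test_le:
  assumes p: "0 < p"
  shows "adj_form p n (mset_set (Fpn p n)) (pattern_test c a)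
           \<le> - real (pattern_count p n c a) / (fact p * real (p ^ n))"
proof -
  let ?P = "{\<sigma>. \<sigma> permutes {0..<p}}"
  let ?ind = "\<lambda>x y \<sigma>. if \<forall>i<p. c (ap_point p x (\<sigma> i) y) = a i then 1 else 0 :: real"
  have "real (pattern_count p n c a) = (\<Sum>b\<in>Fpn p n \<times> Fpn p n. ?ind (fst b) (snd b) id)"
    using sum.inter_filter[of "Fpn p n \<times> Fpn p n" "\<lambda>_. 1 :: real"
        "\<lambda>b. \<forall>i<p. c (ap_point p (fst b) i (snd b)) = a i"]
    by (simp add: pattern_count_def finite_Fpn)
  also have "\<dots> = (\<Sum>x\<in>Fpn p n. \<Sum>y\<in>Fpn p n. ?ind x y id)"
    by (simp add: sum.cartesian_product case_prod_beta)
  also have "\<dots> = (\<Sum>y\<in>Fpn p n. \<Sum>x\<in>Fpn p n. ?ind x y id)"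
    by (rule sum.swap)
  also have "\<dots> \<le> (\<Sum>y\<in>Fpn p n. \<Sum>x\<in>Fpn p n. \<Sum>\<sigma>\<in>?P. ?ind x y \<sigma>)"
    by (intro sum_mono member_le_sum) (simp_all add: permutes_id[unfolded id_def] finite_permutations)
  finally have "real (pattern_count p n c a) \<le> (\<Sum>y\<in>Fpn p n. \<Sum>x\<in>Fpn p n. \<Sum>\<sigma>\<in>?P. ?ind x y \<sigma>)" .
  then show ?thesis
    using finite_Fpn zero_in_Fpn[OF p]
    by (simp add: adj_form_eq_ap_sum[OF p] prod_pattern_test[OF p] sum_unfold_sum_mset[symmetric]
        sum_negf card_Fpn divide_right_mono)
qed

lemma lambda_AP_ge_pattern_count:
  assumes p: "0 < p" and D: "set_mset D \<subseteq> Fpn p n" "D \<noteq> {#}"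
    and avoid: "\<And>x y \<sigma>. y \<in># D \<Longrightarrow> \<sigma> permutes {0..<p} \<Longrightarrow> \<not> (\<forall>i<p. c (ap_point p x (\<sigma> i) y) = a i)"
    and count: "0 < pattern_count p n c a"
  shows "real (pattern_count p n c a) / (fact p * real (p ^ n) ^ 2) \<le> lambda_AP p n D"
proof -
  let ?f = "pattern_test c a"
  let ?N = "\<lambda>i. lr_norm p n (real p) (?f i)"
  let ?M = "real (p ^ n)"
  obtain x y where xy: "x \<in> Fpn p n" "y \<in> Fpn p n" "\<forall>i<p. c (ap_point p x i y) = a i"
    using count by (auto simp: pattern_count_def card_gt_0_iff)
  have f: "\<exists>v\<in>Fpn p n. ?f i v \<noteq> 0" if "i < p" for i
    using xy that ap_point_in_Fpn[OF p xy(1,2)] by (auto simp: pattern_test_def)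
  let ?X = "real (pattern_count p n c a) / (fact p * ?M)"
  have Npos: "0 < (\<Prod>i<p. ?N i)"
    using f lr_norm_pos by (intro prod_pos) blast
  have "(\<Prod>i<p. ?N i) \<le> (\<Prod>i<p. ?M powr (1 / real p))"
    by (intro prod_mono conjI lr_norm_le_card_powr) (simp_all add: lr_norm_def pattern_test_def)
  then have Nle: "(\<Prod>i<p. ?N i) \<le> ?M"
    using p by (simp add: powr_power)
  have X: "0 \<le> ?X" "?X \<le> adj_form p n D ?f - adj_form p n (mset_set (Fpn p n)) ?f"
    using adj_form_pattern_test_eq_0[where c = c and a = a, OF p D(1) avoid]
      adj_form_Fpn_pattern_test_le[OF p, of n c a] by simp_all
  have "?X / ?M \<le> ?X / (\<Prod>i<p. ?N i)"
    using p Npos Nle X(1) by (intro divide_left_mono) auto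
  also have "\<dots> \<le> (adj_form p n D ?f - adj_form p n (mset_set (Fpn p n)) ?f) / (\<Prod>i<p. ?N i)"
    using Npos X(2) by (intro divide_right_mono) auto
  also have "\<dots> \<le> lambda_AP p n D"
    by (rule adj_form_diff_ratio_le_lambda_AP[OF p D f])
  finally show ?thesis by (simp add: power2_eq_square mult.assoc)
qed

lemma exists_large_fibre:
  assumes B: "finite B" "B \<noteq> {}" and C: "V ` B \<subseteq> C" "finite C"
  shows "\<exists>a\<in>V ` B. card B \<le> card C * card {b\<in>B. V b = a}"
proof -
  let ?fibre = "\<lambda>a. card {b\<in>B. V b = a}"
  let ?K = "Max (?fibre ` V ` B)"
  have "?K \<in> ?fibre ` V ` B" using B by (intro Max_in) auto
  then obtain a where a: "a \<in> V ` B" and K: "?fibre a = ?K" by (rule imageE) simp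
  have max: "?fibre a' \<le> ?fibre a" if "a' \<in> V ` B" for a'
    unfolding K using B(1) that by (intro Max_ge) auto
  have "card B \<le> card (\<Union>a'\<in>V ` B. {b\<in>B. V b = a'})"
    using B(1) by (intro card_mono) auto
  also have "\<dots> \<le> (\<Sum>a'\<in>V ` B. ?fibre a')"
    using B(1) by (intro card_UN_le) simp
  also have "\<dots> \<le> card (V ` B) * ?fibre a"
    using sum_bounded_above[of "V ` B" ?fibre "?fibre a"] max by simp
  also have "\<dots> \<le> card C * ?fibre a"
    using card_mono[OF C(2,1)] by simp
  finally show ?thesis using a by blast
qed

lemma sum_pattern_multilinear_poly_cong:
  assumes p: "prime p" and F: "\<And>S. S \<in> F \<Longrightarrow> finite S \<and> card S = p - 1"
    and \<sigma>: "\<sigma> permutes {0..<p}"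
    and a: "\<forall>i<p. multilinear_poly d F (ap_point p x (\<sigma> i) y) mod int p = a i"
  shows "[(\<Sum>i<p. a i) = - multilinear_poly d F y] (mod int p)"
proof -
  let ?g = "\<lambda>i. multilinear_poly d F (ap_point p x i y) mod int p"
  have "(\<Sum>i<p. a i) = (\<Sum>i\<in>{0..<p}. (?g \<circ> \<sigma>) i)"
    using a by (simp add: atLeast0LessThan)
  also have "\<dots> = (\<Sum>i<p. ?g i)"
    using sum.permute[OF \<sigma>, of ?g] by (simp add: atLeast0LessThan)
  also have "[\<dots> = (\<Sum>i<p. multilinear_poly d F (ap_point p x i y))] (mod int p)"
    by (rule cong_sum) (simp add: cong_def)
  also have "[(\<Sum>i<p. multilinear_poly d F (ap_point p x i y)) = - multilinear_poly d F y] (mod int p)"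
    by (rule sum_ap_multilinear_poly_cong[OF p F])
  finally show ?thesis .
qed

lemma exists_popular_pattern:
  assumes p: "prime p" and S0: "S0 \<in> subsets_of_size (p - 1) n" and nd: "\<not> int p dvd d S0"
  defines "c \<equiv> \<lambda>v. multilinear_poly d (subsets_of_size (p - 1) n) v mod int p"
  shows "\<exists>a. \<not> int p dvd (\<Sum>i<p. a i) \<and> p ^ n * p ^ n \<le> p ^ (2 * p - 1) * pattern_count p n c a"
proof -
  let ?F = "subsets_of_size (p - 1) n"
  have F: "finite S \<and> card S = p - 1" if "S \<in> ?F" for S
    using that by (auto simp: subsets_of_size_def intro: finite_subset)
  have p0: "0 < p" using p by (simp add: prime_gt_0_nat)
  define G where "G = {y\<in>Fpn p n. \<not> int p dvd multilinear_poly d ?F y}"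
  define B where "B = Fpn p n \<times> G"
  define V where "V b = (\<lambda>i\<in>{0..<p}. c (ap_point p (fst b) i (snd b)))" for b
  have G: "p ^ n \<le> p ^ (p - 1) * card G"
    using card_Fpn_le_multilinear_poly_nonzero[where d = d, OF p S0 nd] by (simp add: G_def card_Fpn)
  have cardB: "card B = p ^ n * card G"
    by (simp add: B_def card_cartesian_product card_Fpn)
  have "B \<noteq> {}" using G p0 zero_in_Fpn[OF p0] by (auto simp: B_def)
  moreover have "finite B" by (simp add: B_def G_def finite_Fpn)
  moreover have "V b \<in> {0..<p} \<rightarrow>\<^sub>E {0..<int p}" for b
    unfolding V_def using p0 by (intro restrict_PiE[THEN iffD2] Pi_I) (simp add: c_def)
  moreover have "finite ({0..<p} \<rightarrow>\<^sub>E {0..<int p})" by (simp add: finite_PiE)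
  ultimately obtain a where "a \<in> V ` B"
    and fibre: "card B \<le> card ({0..<p} \<rightarrow>\<^sub>E {0..<int p}) * card {b\<in>B. V b = a}"
    using exists_large_fibre[of B V] by blast
  then obtain b0 where b0: "b0 \<in> B" "V b0 = a" by blast
  have "[(\<Sum>i<p. a i) = - multilinear_poly d ?F (snd b0)] (mod int p)"
    using b0(2) by (intro sum_pattern_multilinear_poly_cong[OF p F permutes_id, of _ d "fst b0"])
      (auto simp: V_def c_def)
  then have a: "\<not> int p dvd (\<Sum>i<p. a i)"
    using b0(1) by (auto simp: B_def G_def cong_dvd_iff)
  have "{b\<in>B. V b = a} \<subseteq> {b \<in> Fpn p n \<times> Fpn p n. \<forall>i<p. c (ap_point p (fst b) i (snd b)) = a i}"
    by (auto simp: B_def G_def V_def)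
  then have "card {b\<in>B. V b = a} \<le> pattern_count p n c a"
    unfolding pattern_count_def by (intro card_mono) (simp_all add: finite_Fpn)
  with fibre have "card B \<le> p ^ p * pattern_count p n c a"
    by (simp add: card_PiE) (meson le_trans mult_le_mono2)
  have "p ^ n * p ^ n \<le> p ^ (p - 1) * card G * p ^ n"
    using G by simp
  also have "\<dots> = p ^ (p - 1) * card B"
    by (simp add: cardB)
  also have "\<dots> \<le> p ^ (p - 1) * (p ^ p * pattern_count p n c a)"
    using \<open>card B \<le> p ^ p * pattern_count p n c a\<close> by simp
  also have "\<dots> = p ^ (2 * p - 1) * pattern_count p n c a"
    using p0 by (simp add: power_add[symmetric] mult.assoc mult_2)
  finally show ?thesis using a by blast
qed

lemma lambda_AP_ge_of_vanishing_multilinear_poly: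
  assumes p: "prime p" and S0: "S0 \<in> subsets_of_size (p - 1) n" and nd: "\<not> int p dvd d S0"
    and D: "set_mset D \<subseteq> Fpn p n" "D \<noteq> {#}"
    and vanish: "\<forall>y\<in>#D. int p dvd multilinear_poly d (subsets_of_size (p - 1) n) y"
  shows "1 / (fact p * real p ^ (2 * p - 1)) \<le> lambda_AP p n D"
proof -
  let ?F = "subsets_of_size (p - 1) n"
  let ?c = "\<lambda>v. multilinear_poly d ?F v mod int p"
  have p0: "0 < p" using p by (simp add: prime_gt_0_nat)
  obtain a where a: "\<not> int p dvd (\<Sum>i<p. a i)"
    and count: "p ^ n * p ^ n \<le> p ^ (2 * p - 1) * pattern_count p n ?c a"
    using exists_popular_pattern[where d = d, OF p S0 nd] by blast
  have avoid: "\<not> (\<forall>i<p. ?c (ap_point p x (\<sigma> i) y) = a i)"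
    if "y \<in># D" "\<sigma> permutes {0..<p}" for x y \<sigma>
  proof
    assume "\<forall>i<p. ?c (ap_point p x (\<sigma> i) y) = a i"
    then have "[(\<Sum>i<p. a i) = - multilinear_poly d ?F y] (mod int p)"
      using that(2) by (intro sum_pattern_multilinear_poly_cong[OF p])
        (auto simp: subsets_of_size_def intro: finite_subset)
    with a vanish that(1) show False by (auto simp: cong_dvd_iff)
  qed
  have "0 < pattern_count p n ?c a"
    using count p0 by (cases "pattern_count p n ?c a") simp_all
  with avoid have "real (pattern_count p n ?c a) / (fact p * real (p ^ n) ^ 2) \<le> lambda_AP p n D"
    by (rule lambda_AP_ge_pattern_count[OF p0 D])
  moreover have "fact p * real (p ^ n) ^ 2 \<le> fact p * (real p ^ (2 * p - 1) * pattern_count p n ?c a)"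
    using count by (intro mult_left_mono) (simp_all add: power2_eq_square flip: of_nat_mult of_nat_power)
  then have "1 / (fact p * real p ^ (2 * p - 1)) \<le> real (pattern_count p n ?c a) / (fact p * real (p ^ n) ^ 2)"
    using p0 by (simp add: field_simps)
  ultimately show ?thesis by linarith
qed

lemma binomial_le_size_of_lambda_AP_lt:
  assumes p: "prime p" and D: "set_mset D \<subseteq> Fpn p n" "D \<noteq> {#}"
    and lambda: "lambda_AP p n D < 1 / (fact p * real p ^ (2 * p - 1))"
  shows "n choose (p - 1) \<le> size D"
proof (rule ccontr)
  assume "\<not> n choose (p - 1) \<le> size D"
  moreover have "card (set_mset D) \<le> size D"
    using size_mset_mono[OF mset_set_set_mset_msubset[of D]] by simp
  ultimately have "card (set_mset D) < card (subsets_of_size (p - 1) n)"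
    by (simp add: card_subsets_of_size)
  then obtain d S0 where "S0 \<in> subsets_of_size (p - 1) n" "\<not> int p dvd d S0"
    "\<forall>y\<in>#D. int p dvd multilinear_poly d (subsets_of_size (p - 1) n) y"
    using exists_multilinear_poly_vanishing_on[OF prime_gt_1_nat[OF p] finite_subsets_of_size]
    by blast
  with lambda_AP_ge_of_vanishing_multilinear_poly[OF p _ _ D] lambda show False
    by fastforce
qed

theorem theorem2p1:
  fixes p :: nat
  assumes "prime p"
  shows "\<exists>\<epsilon>0 \<delta>0 :: real. \<epsilon>0 > 0 \<and> \<delta>0 > 0 \<and>
    (\<forall>(n::nat) (D :: (nat \<Rightarrow> nat) multiset) (\<epsilon>::real).
       n \<ge> p ^ 2 \<longrightarrow> \<epsilon> < \<epsilon>0 \<longrightarrow> D \<noteq> {#} \<longrightarrow> set_mset D \<subseteq> Fpn p n \<longrightarrow>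
       lambda_AP p n D \<le> \<epsilon> \<longrightarrow> real (size D) \<ge> \<delta>0 * real n ^ (p - 1))"
proof -
  define \<epsilon>0 :: real where "\<epsilon>0 = 1 / (fact p * real p ^ (2 * p - 1))"
  define \<delta>0 :: real where "\<delta>0 = 1 / real (p - 1) ^ (p - 1)"
  have p2: "2 \<le> p" using assms by (simp add: prime_ge_2_nat)
  have "real (size D) \<ge> \<delta>0 * real n ^ (p - 1)"
    if "n \<ge> p ^ 2" "\<epsilon> < \<epsilon>0" "D \<noteq> {#}" "set_mset D \<subseteq> Fpn p n" "lambda_AP p n D \<le> \<epsilon>" for n D \<epsilon>
  proof -
    have "p - 1 \<le> n" using that(1) power_increasing[of 1 2 p] p2 by simp
    have "\<delta>0 * real n ^ (p - 1) = (real n / real (p - 1)) ^ (p - 1)"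
      by (simp add: \<delta>0_def power_divide)
    also have "\<dots> \<le> real (n choose (p - 1))"
      using \<open>p - 1 \<le> n\<close> by (rule binomial_ge_n_over_k_pow_k)
    also have "\<dots> \<le> real (size D)"
      using binomial_le_size_of_lambda_AP_lt[OF assms that(4,3)] that(2,5) by (simp add: \<epsilon>0_def)
    finally show ?thesis .
  qed
  moreover have "\<epsilon>0 > 0" "\<delta>0 > 0" using p2 by (simp_all add: \<epsilon>0_def \<delta>0_def)
  ultimately show ?thesis by blast
qed

end
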